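(* Let $n\ge 2$ and $a_1,\dots,a_n\in\mathbb{C}$. For $i=1,\dots,n$ let $p_i(x)=\prod_{l\ne i,\,1\le l\le n}(x-a_l)$. Then for every $x\in\mathbb{C}$ the Wronskian \[ W[p_1,\dots,p_n](x)=\det\begin{pmatrix}p_1(x)&\cdots&p_n(x)\\ p_1'(x)&\cdots&p_n'(x)\\ \vdots&&\vdots\\ p_1^{(n-1)}(x)&\cdots&p_n^{(n-1)}(x)\end{pmatrix} \] satisfies \[ W[p_1,\dots,p_n](x)=\Big(\prod_{k=0}^{n-1}k!\Big)\prod_{1\le i<k\le n}(a_i-a_k). \] *)

theory Defs
  imports "HOL-Computational_Algebra.Polynomial" "Jordan_Normal_Form.Determinant"
begin

text \<open>Indices are 0-based: a 0, ..., a (n-1) stand for a_1, ..., a_n.\<close>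

definition node_poly :: "nat \<Rightarrow> (nat \<Rightarrow> complex) \<Rightarrow> nat \<Rightarrow> complex poly" where
  "node_poly n a i = (\<Prod>l\<in>{0..<n} - {i}. [:- a l, 1:])"

definition wronskian :: "nat \<Rightarrow> (nat \<Rightarrow> complex poly) \<Rightarrow> complex \<Rightarrow> complex" where
  "wronskian n p x = det (mat n n (\<lambda>(r, c). poly ((pderiv ^^ r) (p c)) x))"

end

theory Submission
  imports Defs
begin

text \<open>Expanding each \<open>p c\<close> in the monomial basis factors the Wronskian matrix as \<open>D * C\<close>,
where \<open>C\<close> is the coefficient matrix of the \<open>p c\<close> and \<open>D\<close>, the matrix of the derivatives
\<open>(pderiv ^^ r) (monom 1 j)\<close> at \<open>x\<close>, is upper triangular with diagonal entries \<open>r!\<close>.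
Evaluating the \<open>p c\<close> at the nodes factors in the same way as \<open>V * C\<close> with \<open>V\<close> the
Vandermonde matrix, and this product is diagonal with entries \<open>\<Prod>l\<noteq>i. a i - a l\<close>. For
distinct nodes, dividing by \<open>det V\<close> gives \<open>det C\<close>; otherwise two of the \<open>p c\<close> coincide
and both sides vanish.\<close>

lemma higher_pderiv_monom_below:
  fixes c :: "'a::idom"
  assumes "j < r"
  shows "(pderiv ^^ r) (monom c j) = 0"
  using assms by (intro poly_eqI) (simp add: coeff_higher_pderiv coeff_monom)

lemma higher_pderiv_monom_self:
  fixes c :: "'a::idom"
  shows "(pderiv ^^ r) (monom c r) = [:of_nat (fact r) * c:]"
  by (intro poly_eqI)
    (simp add: coeff_higher_pderiv coeff_monom coeff_pCons pochhammer_fact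
      flip: pochhammer_of_nat split: nat.split)

lemma poly_higher_pderiv_eq_sum_coeff:
  fixes p :: "'a::idom poly"
  assumes "degree p < n"
  shows "poly ((pderiv ^^ r) p) x = (\<Sum>j<n. poly ((pderiv ^^ r) (monom 1 j)) x * coeff p j)"
proof -
  have "p = (\<Sum>j<n. smult (coeff p j) (monom 1 j))"
    using poly_as_sum_of_monoms'[of p "n - 1"] assms
    by (simp add: smult_monom lessThan_Suc_atMost[symmetric])
  then have "(pderiv ^^ r) p = (\<Sum>j<n. smult (coeff p j) ((pderiv ^^ r) (monom 1 j)))"
    by (metis (no_types, lifting) higher_pderiv_smult higher_pderiv_sum sum.cong)
  then show ?thesis
    by (simp add: poly_sum mult.commute)
qed

definition coeff_mat :: "nat \<Rightarrow> (nat \<Rightarrow> 'a::zero poly) \<Rightarrow> 'a mat" where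
  "coeff_mat n p = mat n n (\<lambda>(j, c). coeff (p c) j)"

lemma coeff_mat_carrier [simp]: "coeff_mat n p \<in> carrier_mat n n"
  by (simp add: coeff_mat_def)

lemma higher_pderiv_mat_eq_mult_coeff_mat:
  fixes p :: "nat \<Rightarrow> 'a::idom poly"
  assumes "\<And>c. c < n \<Longrightarrow> degree (p c) < n"
  shows "mat n n (\<lambda>(r, c). poly ((pderiv ^^ d r) (p c)) (y r))
       = mat n n (\<lambda>(r, j). poly ((pderiv ^^ d r) (monom 1 j)) (y r)) * coeff_mat n p"
  by (rule eq_matI)
    (auto simp: coeff_mat_def scalar_prod_def poly_higher_pderiv_eq_sum_coeff[OF assms] intro!: sum.cong)

lemma det_higher_pderiv_monom_mat:
  "det (mat n n (\<lambda>(r, j). poly ((pderiv ^^ r) (monom 1 j)) x)) = (of_nat (\<Prod>r<n. fact r) :: 'a::idom)"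
proof -
  have "det (mat n n (\<lambda>(r, j). poly ((pderiv ^^ r) (monom 1 j)) x))
      = prod_list (diag_mat (mat n n (\<lambda>(r, j). poly ((pderiv ^^ r) (monom (1::'a) j)) x)))"
    by (rule det_upper_triangular) (auto simp: upper_triangular_def higher_pderiv_monom_below)
  then show ?thesis
    by (simp add: prod_list_diag_prod higher_pderiv_monom_self atLeast0LessThan)
qed

lemma wronskian_eq_det_coeff_mat:
  assumes "\<And>c. c < n \<Longrightarrow> degree (p c) < n"
  shows "wronskian n p x = of_nat (\<Prod>r<n. fact r) * det (coeff_mat n p)"
proof -
  have "mat n n (\<lambda>(r, c). poly ((pderiv ^^ r) (p c)) x)
      = mat n n (\<lambda>(r, j). poly ((pderiv ^^ r) (monom 1 j)) x) * coeff_mat n p"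
    using higher_pderiv_mat_eq_mult_coeff_mat[of n p id "\<lambda>_. x"] assms by simp
  then show ?thesis
    unfolding wronskian_def
    by (simp add: det_mult[of _ n] det_higher_pderiv_monom_mat)
qed

lemma eval_mat_eq_vandermonde_mult_coeff_mat:
  fixes p :: "nat \<Rightarrow> 'a::idom poly"
  assumes "\<And>c. c < n \<Longrightarrow> degree (p c) < n"
  shows "mat n n (\<lambda>(m, c). poly (p c) (y m)) = mat n n (\<lambda>(m, j). y m ^ j) * coeff_mat n p"
  using higher_pderiv_mat_eq_mult_coeff_mat[of n p "\<lambda>_. 0" y] assms by (simp add: poly_monom)

definition newton_poly :: "(nat \<Rightarrow> 'a::comm_ring_1) \<Rightarrow> nat \<Rightarrow> 'a poly" where
  "newton_poly y k = (\<Prod>l<k. [:- y l, 1:])"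

lemma degree_newton_poly: "degree (newton_poly (y :: nat \<Rightarrow> 'a::idom) k) = k"
  unfolding newton_poly_def by (subst degree_prod_eq_sum_degree) auto

lemma lead_coeff_newton_poly: "coeff (newton_poly (y :: nat \<Rightarrow> 'a::idom) k) k = 1"
  using lead_coeff_prod[of "\<lambda>l. [:- y l, 1:]" "{..<k}"] degree_newton_poly[of y k]
  unfolding newton_poly_def by simp

lemma det_coeff_mat_newton_poly: "det (coeff_mat n (newton_poly (y :: nat \<Rightarrow> 'a::idom))) = 1"
proof -
  have "det (coeff_mat n (newton_poly y)) = prod_list (diag_mat (coeff_mat n (newton_poly y)))"
    by (rule det_upper_triangular)
      (auto simp: upper_triangular_def coeff_mat_def coeff_eq_0 degree_newton_poly)
  then show ?thesis
    by (simp add: prod_list_diag_prod coeff_mat_def lead_coeff_newton_poly)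
qed

lemma det_vandermonde:
  fixes y :: "nat \<Rightarrow> 'a::idom"
  shows "det (mat n n (\<lambda>(m, j). y m ^ j)) = (\<Prod>m<n. \<Prod>l<m. y m - y l)"
proof -
  let ?E = "mat n n (\<lambda>(m, c). poly (newton_poly y c) (y m))"
  have "?E = mat n n (\<lambda>(m, j). y m ^ j) * coeff_mat n (newton_poly y)"
    by (rule eval_mat_eq_vandermonde_mult_coeff_mat) (simp add: degree_newton_poly)
  then have "det ?E = det (mat n n (\<lambda>(m, j). y m ^ j))"
    by (simp add: det_mult[of _ n] det_coeff_mat_newton_poly)
  moreover have "det ?E = prod_list (diag_mat ?E)"
    by (rule det_lower_triangular[of n]) (auto simp: newton_poly_def poly_prod)
  ultimately show ?thesis
    by (simp add: prod_list_diag_prod newton_poly_def poly_prod atLeast0LessThan)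
qed

lemma prod_atLeast0LessThan_minus_split:
  fixes i n :: nat
  assumes "i < n"
  shows "(\<Prod>l\<in>{0..<n} - {i}. f l) = (\<Prod>l<i. f l) * (\<Prod>l\<in>{i<..<n}. f l)"
proof -
  from assms have "{0..<n} - {i} = {..<i} \<union> {i<..<n}" by auto
  moreover have "prod f ({..<i} \<union> {i<..<n}) = prod f {..<i} * prod f {i<..<n}"
    by (rule prod.union_disjoint) auto
  ultimately show ?thesis by simp
qed

lemma degree_node_poly: "i < n \<Longrightarrow> degree (node_poly n a i) < n"
  unfolding node_poly_def by (subst degree_prod_eq_sum_degree) auto

lemma poly_node_poly_at_node:
  assumes "m < n" "i < n"
  shows "poly (node_poly n a i) (a m) = (if m = i then (\<Prod>l\<in>{0..<n} - {i}. a i - a l) else 0)"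
  using assms unfolding node_poly_def poly_prod by auto

lemma node_poly_eq_if_node_eq:
  assumes "a l = a m" "l < n" "m < n"
  shows "node_poly n a l = node_poly n a m"
proof (cases "l = m")
  case False
  have "node_poly n a i = [:- a l, 1:] * (\<Prod>j\<in>{0..<n} - {l, m}. [:- a j, 1:])"
    if "i \<in> {l, m}" for i
  proof -
    let ?k = "if i = l then m else l"
    have "{0..<n} - {i} = insert ?k ({0..<n} - {l, m})" and "a ?k = a l"
      using that assms False by auto
    then show ?thesis unfolding node_poly_def by simp
  qed
  then show ?thesis by simp
qed simp

lemma det_coeff_mat_node_poly:
  "det (coeff_mat n (node_poly n a)) = (\<Prod>i<n. \<Prod>k\<in>{i<..<n}. a i - a k)"
proof (cases "\<exists>l m. l < m \<and> m < n \<and> a l = a m")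
  case True
  then obtain l m where lm: "l < m" "m < n" "a l = a m" by blast
  then have "node_poly n a l = node_poly n a m" by (intro node_poly_eq_if_node_eq) auto
  with lm have "det (coeff_mat n (node_poly n a)) = 0"
    by (intro det_identical_columns[of _ n l m]) (auto simp: coeff_mat_def intro!: eq_vecI)
  moreover have "(\<Prod>k\<in>{l<..<n}. a l - a k) = 0"
    using lm by (intro prod_zero) force+
  then have "(\<Prod>i<n. \<Prod>k\<in>{i<..<n}. a i - a k) = 0"
    using lm by (intro prod_zero) force+
  ultimately show ?thesis by simp
next
  case False
  let ?V = "mat n n (\<lambda>(m, j). a m ^ j)"
  let ?E = "mat n n (\<lambda>(m, c). poly (node_poly n a c) (a m))"
  have "?E = ?V * coeff_mat n (node_poly n a)"
    by (rule eval_mat_eq_vandermonde_mult_coeff_mat) (rule degree_node_poly)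
  then have "det ?V * det (coeff_mat n (node_poly n a)) = det ?E"
    by (simp add: det_mult[of _ n])
  also have "det ?E = prod_list (diag_mat ?E)"
    by (rule det_upper_triangular) (auto simp: upper_triangular_def poly_node_poly_at_node)
  also have "\<dots> = (\<Prod>i<n. \<Prod>l\<in>{0..<n} - {i}. a i - a l)"
    by (simp add: prod_list_diag_prod poly_node_poly_at_node atLeast0LessThan)
  also have "\<dots> = (\<Prod>i<n. (\<Prod>l<i. a i - a l) * (\<Prod>k\<in>{i<..<n}. a i - a k))"
    by (rule prod.cong) (simp_all add: prod_atLeast0LessThan_minus_split)
  also have "\<dots> = det ?V * (\<Prod>i<n. \<Prod>k\<in>{i<..<n}. a i - a k)"
    by (simp add: det_vandermonde prod.distrib)
  finally have "det ?V * det (coeff_mat n (node_poly n a)) = det ?V * (\<Prod>i<n. \<Prod>k\<in>{i<..<n}. a i - a k)" .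
  moreover have "det ?V \<noteq> 0"
    using False by (auto simp: det_vandermonde) metis
  ultimately show ?thesis by simp
qed

theorem mainTheorem3:
  fixes n :: nat and a :: "nat \<Rightarrow> complex" and x :: complex
  assumes "n \<ge> 2"
  shows "wronskian n (node_poly n a) x
         = of_nat (\<Prod>k<n. fact k) * (\<Prod>i<n. \<Prod>k\<in>{i<..<n}. (a i - a k))"
  by (simp add: wronskian_eq_det_coeff_mat degree_node_poly det_coeff_mat_node_poly)

end
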